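(* For $m,n\in \mathbb{Z}_{>1}$, we have \begin{align*} \zeta(m)\zeta(n)-\zeta(m+n)=P(m,n)+P(n,m), \end{align*} where $P(m,n):=\sum^{m-1}_{i=0}(-1)^{i}\binom{n+i-1}{i}\zeta(n+i)\zeta_{\sqcup\!\sqcup}(m-i)+(-1)^{m}\sum^{n-1}_{j=0}\binom{m+j-1}{j}\bigl\{\zeta(m+j)\zeta_{\sqcup\!\sqcup}(n-j)-\zeta^{\star}(n-j,m+j)\bigr\}$, and \begin{align*} \zeta(m, n)=&\sum^{m-1}_{i=0}(-1)^{i}\binom{n+i-1}{i}\Bigl\{\zeta_{*}(n+i, m-i)+\zeta(m-i, n+i)+\zeta(m+n)\Bigr\}\\ &+(-1)^{m}\sum^{n-1}_{j=0}\binom{m+j-1}{j}\zeta_{*}(m+j, n-j). \end{align*}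
   Context: For $n\in\mathbb{Z}_{>0}$, $m\in\mathbb{Z}_{>1}$: $\zeta(m)=\sum_{k\ge1}k^{-m}$, $\zeta(n,m)=\sum_{0<k_1<k_2}k_1^{-n}k_2^{-m}$, $\zeta^\star(n,m)=\sum_{0<k_1\le k_2}k_1^{-n}k_2^{-m}=\zeta(n,m)+\zeta(m+n)$. Shuffle regularized values: for $m\in\mathbb{Z}_{>0}$, as $\epsilon\to0$, $\sum_{k>0}(1-\epsilon)^k/k^m\sim c_0+c_1(-\log\epsilon)$ and $\zeta_{\sqcup\!\sqcup}(m):=c_0+c_1T\in\mathbb{R}[T]$; so $\zeta_{\sqcup\!\sqcup}(1)=T$, $\zeta_{\sqcup\!\sqcup}(m)=\zeta(m)$ for $m>1$. Harmonic regularized values: for $m,n\in\mathbb{Z}_{>0}$, as $N\to\infty$, $\sum_{0<k_1<k_2<N}k_1^{-m}k_2^{-n}\sim b_0+b_1(\log N+\gamma)+b_2(\log N+\gamma)^2$ ($\gamma$ Euler's constant) and $\zeta_{*}(m,n):=b_0+b_1T+b_2T^2\in\mathbb{R}[T]$; $\zeta_*(m,n)=\zeta(m,n)$ when $n>1$. The identities are equalities in $\mathbb{R}[T]$. *)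

theory Defs
  imports "HOL-Analysis.Analysis" "HOL-Computational_Algebra.Polynomial"
begin

text \<open>Riemann zeta value zeta(m) = sum_{k>=1} k^{-m} (meaningful for m > 1).\<close>
definition zeta :: "nat \<Rightarrow> real" where
  "zeta m = (\<Sum>k. 1 / real (k + 1) ^ m)"

definition mzv2 :: "nat \<Rightarrow> nat \<Rightarrow> real" where
  "mzv2 n m = (\<Sum>\<^sub>\<infinity>(k1, k2) \<in> {(k1, k2). 0 < k1 \<and> k1 < k2}.
      1 / (real k1 ^ n * real k2 ^ m))"

definition mzv2_star :: "nat \<Rightarrow> nat \<Rightarrow> real" where
  "mzv2_star n m = (\<Sum>\<^sub>\<infinity>(k1, k2) \<in> {(k1, k2). 0 < k1 \<and> k1 \<le> k2}.
      1 / (real k1 ^ n * real k2 ^ m))"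

definition zeta_sh :: "nat \<Rightarrow> real poly" where
  "zeta_sh m = (THE p. degree p \<le> 1 \<and>
      ((\<lambda>\<epsilon>. (\<Sum>k. (1 - \<epsilon>) ^ (k + 1) / real (k + 1) ^ m) - poly p (- ln \<epsilon>))
        \<longlongrightarrow> 0) (at_right 0))"

definition zeta_st :: "nat \<Rightarrow> nat \<Rightarrow> real poly" where
  "zeta_st m n = (THE p. degree p \<le> 2 \<and>
      ((\<lambda>N::nat. (\<Sum>k2\<in>{1..<N}. \<Sum>k1\<in>{1..<k2}. 1 / (real k1 ^ m * real k2 ^ n))
          - poly p (ln (real N) + euler_mascheroni)) \<longlongrightarrow> 0) at_top)"

definition P_poly :: "nat \<Rightarrow> nat \<Rightarrow> real poly" where
  "P_poly m n =
     (\<Sum>i<m. (-1) ^ i * of_nat ((n + i - 1) choose i) * [:zeta (n + i):] * zeta_sh (m - i))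
     + (-1) ^ m * (\<Sum>j<n. of_nat ((m + j - 1) choose j) *
          ([:zeta (m + j):] * zeta_sh (n - j) - [:mzv2_star (n - j) (m + j):]))"

end

theory Submission
  imports Defs "HOL-Real_Asymp.Real_Asymp"
begin

text \<open>
  Summing the partial fraction expansion of \<open>1 / (x\<^sup>m (x + y)\<^sup>n)\<close> over \<open>x, y \<ge> 1\<close>, \<open>x + y < N\<close>
  writes the truncated double zeta value \<open>\<zeta>\<^sub>N(m, n)\<close> as a combination of truncated double zeta
  values and of simplex sums \<open>\<Sum>\<^bsub>x + y < N\<^esub> x\<^sup>-\<^sup>a y\<^sup>-\<^sup>b\<close>. A simplex sum differs from the product
  \<open>\<zeta>\<^sub>N(a) \<zeta>\<^sub>N(b)\<close> of truncated zeta values only by a corner sum of size \<open>O((ln N)\<^sup>2 / N)\<close>.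
  Keeping that product as it is (shuffle side), or expanding it by the harmonic product
  \<open>\<zeta>\<^sub>N(a) \<zeta>\<^sub>N(b) = \<zeta>\<^sub>N(a, b) + \<zeta>\<^sub>N(b, a) + \<zeta>\<^sub>N(a + b)\<close> (stuffle side), every term acquires an
  asymptotic expansion as a polynomial in \<open>\<zeta>\<^sub>N(1) = H\<^sub>N\<^sub>-\<^sub>1\<close>, resp. in \<open>ln N + \<gamma>\<close>, and these
  polynomials are precisely the regularized values. As \<open>\<zeta>\<^sub>N(m, n) \<longrightarrow> \<zeta>(m, n)\<close> and polynomial
  expansions in a variable tending to infinity are unique, this yields \<open>P(m, n) = \<zeta>(m, n)\<close> and the
  second identity; the first follows from \<open>\<zeta>(m) \<zeta>(n) - \<zeta>(m + n) = \<zeta>(m, n) + \<zeta>(n, m)\<close>.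
\<close>

section \<open>Partial fractions\<close>

lemma partial_fractions_linear:
  fixes x y :: "'a::field"
  assumes "x \<noteq> 0" "y \<noteq> 0" "x + y \<noteq> 0"
  shows "(\<Sum>l<k. 1 / (y ^ (l + 1) * (x + y) ^ (k - l))) = 1 / (x * y ^ k) - 1 / (x * (x + y) ^ k)"
proof -
  define t where "t l = 1 / (x * y ^ l * (x + y) ^ (k - l))" for l
  have "1 / (y ^ (l + 1) * (x + y) ^ (k - l)) = t (Suc l) - t l" if "l < k" for l
  proof -
    have "(x + y) ^ (k - l) = (x + y) * (x + y) ^ (k - Suc l)"
      using that by (simp flip: power_Suc add: Suc_diff_Suc)
    moreover have "1 / (y ^ (l + 1) * ((x + y) * q)) = 1 / (x * y ^ Suc l * q) - 1 / (x * y ^ l * ((x + y) * q))"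
      if "q \<noteq> 0" for q
      using assms that by (simp add: divide_simps)
    ultimately show ?thesis
      unfolding t_def using assms by simp
  qed
  then have "(\<Sum>l<k. 1 / (y ^ (l + 1) * (x + y) ^ (k - l))) = (\<Sum>l<k. t (Suc l) - t l)"
    by (intro sum.cong) auto
  also have "\<dots> = t k - t 0"
    by (rule sum_lessThan_telescope)
  finally show ?thesis
    by (simp add: t_def)
qed

text \<open>Dividing the second part of the expansion by \<open>x\<close>: each \<open>1 / (x (x + y)\<^sup>k)\<close> is expanded by
  \<open>partial_fractions_linear\<close>, and collecting terms of equal \<open>(x + y)\<close>-degree sums the coefficients.\<close>

lemma partial_fractions_shift:
  fixes x y :: "'a::field" and b :: "nat \<Rightarrow> 'a"
  assumes "x \<noteq> 0" "y \<noteq> 0" "x + y \<noteq> 0"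
  shows "(\<Sum>j<n. b j / (x * y ^ (m + j) * (x + y) ^ (n - j))) =
    (\<Sum>j<n. b j) / (x * y ^ (m + n)) - (\<Sum>k<n. (\<Sum>j\<le>k. b j) / (y ^ (Suc m + k) * (x + y) ^ (n - k)))"
proof -
  have "(\<Sum>j<n. b j / (x * y ^ (m + j) * (x + y) ^ (n - j))) =
      (\<Sum>j<n. b j / (x * y ^ (m + n)) - (\<Sum>l<n - j. b j / (y ^ (Suc m + (j + l)) * (x + y) ^ (n - (j + l)))))"
  proof (intro sum.cong refl)
    fix j assume "j \<in> {..<n}"
    then have y_pow: "y ^ (m + j) * y ^ (n - j) = y ^ (m + n)" "y ^ (m + j) * y ^ (l + 1) = y ^ (Suc m + (j + l))"
      and "n - j - l = n - (j + l)" for l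
      by (simp_all add: add.assoc flip: power_add)
    have "b j / (x * y ^ (m + j) * (x + y) ^ (n - j)) = b j / y ^ (m + j) * (1 / (x * (x + y) ^ (n - j)))"
      by simp
    also have "\<dots> = b j / y ^ (m + j) * (1 / (x * y ^ (n - j)) - (\<Sum>l<n - j. 1 / (y ^ (l + 1) * (x + y) ^ (n - j - l))))"
      using partial_fractions_linear[OF assms, of "n - j"] by simp
    also have "\<dots> = b j / (y ^ (m + j) * y ^ (n - j) * x)
        - (\<Sum>l<n - j. b j / (y ^ (m + j) * y ^ (l + 1) * (x + y) ^ (n - j - l)))"
      by (simp add: right_diff_distrib sum_distrib_left mult_ac)
    also have "\<dots> = b j / (x * y ^ (m + n)) - (\<Sum>l<n - j. b j / (y ^ (Suc m + (j + l)) * (x + y) ^ (n - (j + l))))"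
      unfolding y_pow by (simp add: mult.commute)
    finally show "b j / (x * y ^ (m + j) * (x + y) ^ (n - j)) =
        b j / (x * y ^ (m + n)) - (\<Sum>l<n - j. b j / (y ^ (Suc m + (j + l)) * (x + y) ^ (n - (j + l))))" .
  qed
  also have "\<dots> = (\<Sum>j<n. b j) / (x * y ^ (m + n))
      - (\<Sum>(j, l)\<in>{(j, l). j + l < n}. b j / (y ^ (Suc m + (j + l)) * (x + y) ^ (n - (j + l))))"
    by (simp add: sum_subtractf sum_divide_distrib sum.Sigma) (intro sum.cong; force)
  also have "\<dots> = (\<Sum>j<n. b j) / (x * y ^ (m + n)) - (\<Sum>k<n. (\<Sum>j\<le>k. b j) / (y ^ (Suc m + k) * (x + y) ^ (n - k)))"
    by (simp add: sum.triangle_reindex sum_divide_distrib)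
  finally show ?thesis .
qed

lemma partial_fractions:
  fixes x y :: "'a::field"
  assumes "x \<noteq> 0" "y \<noteq> 0" "x + y \<noteq> 0" and "m \<ge> 1" "n \<ge> 1"
  shows "1 / (x ^ m * (x + y) ^ n) =
      (\<Sum>i<m. (-1) ^ i * of_nat ((n + i - 1) choose i) / (x ^ (m - i) * y ^ (n + i)))
    + (-1) ^ m * (\<Sum>j<n. of_nat ((m + j - 1) choose j) / (y ^ (m + j) * (x + y) ^ (n - j)))"
  using \<open>m \<ge> 1\<close>
proof (induction m rule: nat_induct_at_least)
  case base
  have "(\<Sum>j<n. 1 / (y ^ (1 + j) * (x + y) ^ (n - j))) = 1 / (x * y ^ n) - 1 / (x * (x + y) ^ n)"
    using partial_fractions_linear[OF assms(1-3)] by (simp add: add.commute)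
  then show ?case
    by simp
next
  case (Suc m)
  define b where "b j = (of_nat ((m + j - 1) choose j) :: 'a)" for j
  have hockey_stick: "(\<Sum>j\<le>k. b j) = of_nat ((m + k) choose k)" for k
    using sum_choose_lower[of "m - 1" k] Suc.hyps by (simp add: b_def flip: of_nat_sum)
  have sum_b: "(\<Sum>j<n. b j) = of_nat ((n + m - 1) choose m)"
  proof -
    have "{..<n} = {..n - 1}"
      using \<open>n \<ge> 1\<close> by auto
    then show ?thesis
      using hockey_stick[of "n - 1"] binomial_symmetric[of "n - 1" "m + (n - 1)"] \<open>n \<ge> 1\<close>
      by (simp add: add.commute)
  qed
  have "1 / (x ^ Suc m * (x + y) ^ n) = 1 / x * (1 / (x ^ m * (x + y) ^ n))"
    by simp
  also have "\<dots> = (\<Sum>i<m. (-1) ^ i * of_nat ((n + i - 1) choose i) / (x ^ (Suc m - i) * y ^ (n + i)))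
      + (-1) ^ m * (\<Sum>j<n. b j / (x * y ^ (m + j) * (x + y) ^ (n - j)))"
    unfolding Suc.IH by (simp add: distrib_left sum_distrib_left b_def Suc_diff_le mult_ac)
  finally show ?case
    unfolding partial_fractions_shift[OF assms(1-3)] hockey_stick sum_b by (simp add: algebra_simps)
qed

section \<open>Truncated zeta values\<close>

definition zeta_part :: "nat \<Rightarrow> nat \<Rightarrow> real" where
  "zeta_part N a = (\<Sum>k\<in>{1..<N}. 1 / real k ^ a)"

definition pair_sum :: "(nat \<times> nat) set \<Rightarrow> nat \<Rightarrow> nat \<Rightarrow> real" where
  "pair_sum S a b = (\<Sum>(x, y)\<in>S. 1 / (real x ^ a * real y ^ b))"

definition mzv_pairs :: "nat \<Rightarrow> (nat \<times> nat) set" where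
  "mzv_pairs N = {(k1, k2). 0 < k1 \<and> k1 < k2 \<and> k2 < N}"

definition mzv_star_pairs :: "nat \<Rightarrow> (nat \<times> nat) set" where
  "mzv_star_pairs N = {(k1, k2). 0 < k1 \<and> k1 \<le> k2 \<and> k2 < N}"

definition simplex_pairs :: "nat \<Rightarrow> (nat \<times> nat) set" where
  "simplex_pairs N = {(x, y). 0 < x \<and> 0 < y \<and> x + y < N}"

definition corner_pairs :: "nat \<Rightarrow> (nat \<times> nat) set" where
  "corner_pairs N = {(x, y). 0 < x \<and> 0 < y \<and> x < N \<and> y < N \<and> N \<le> x + y}"

lemma finite_mzv_pairs: "finite (mzv_pairs N)"
  by (rule finite_subset[of _ "{..<N} \<times> {..<N}"]) (auto simp: mzv_pairs_def)

lemma finite_simplex_pairs: "finite (simplex_pairs N)"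
  by (rule finite_subset[of _ "{..<N} \<times> {..<N}"]) (auto simp: simplex_pairs_def)

lemma finite_corner_pairs: "finite (corner_pairs N)"
  by (rule finite_subset[of _ "{..<N} \<times> {..<N}"]) (auto simp: corner_pairs_def)

lemma pair_sum_mzv_pairs_nested:
  "(\<Sum>k2\<in>{1..<N}. \<Sum>k1\<in>{1..<k2}. 1 / (real k1 ^ a * real k2 ^ b)) = pair_sum (mzv_pairs N) a b"
proof -
  have "pair_sum (mzv_pairs N) a b = (\<Sum>(k2, k1)\<in>Sigma {1..<N} (\<lambda>k2. {1..<k2}). 1 / (real k1 ^ a * real k2 ^ b))"
    unfolding pair_sum_def
    by (rule sum.reindex_bij_witness[of _ prod.swap prod.swap]) (auto simp: mzv_pairs_def)
  then show ?thesis
    by (simp add: sum.Sigma)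
qed

lemma zeta_part_mult: "zeta_part N a * zeta_part N b = pair_sum ({1..<N} \<times> {1..<N}) a b"
  unfolding zeta_part_def pair_sum_def sum_product sum.cartesian_product by simp

lemma zeta_part_mult_eq_mzv_pairs:
  "zeta_part N a * zeta_part N b = pair_sum (mzv_pairs N) a b + pair_sum (mzv_star_pairs N) b a"
proof -
  let ?V = "{(x, y). 0 < y \<and> y \<le> x \<and> x < N}"
  have "finite ?V"
    by (rule finite_subset[of _ "{..<N} \<times> {..<N}"]) auto
  moreover have "{1..<N} \<times> {1..<N} = mzv_pairs N \<union> ?V" "mzv_pairs N \<inter> ?V = {}"
    by (auto simp: mzv_pairs_def)
  moreover have "pair_sum ?V a b = pair_sum (mzv_star_pairs N) b a"
    unfolding pair_sum_def
    by (rule sum.reindex_bij_witness[of _ prod.swap prod.swap]) (auto simp: mzv_star_pairs_def)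
  ultimately show ?thesis
    unfolding zeta_part_mult by (simp add: pair_sum_def sum.union_disjoint finite_mzv_pairs)
qed

lemma pair_sum_mzv_star_pairs:
  "pair_sum (mzv_star_pairs N) a b = pair_sum (mzv_pairs N) a b + zeta_part N (a + b)"
proof -
  let ?G = "(\<lambda>k. (k, k)) ` {1..<N}"
  have "mzv_star_pairs N = mzv_pairs N \<union> ?G" "mzv_pairs N \<inter> ?G = {}"
    by (auto simp: mzv_star_pairs_def mzv_pairs_def)
  moreover have "pair_sum ?G a b = zeta_part N (a + b)"
    unfolding pair_sum_def zeta_part_def by (subst sum.reindex) (auto simp: inj_on_def power_add)
  ultimately show ?thesis
    by (simp add: pair_sum_def sum.union_disjoint finite_mzv_pairs)
qed

lemma zeta_part_mult_eq_simplex: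
  "zeta_part N a * zeta_part N b = pair_sum (simplex_pairs N) a b + pair_sum (corner_pairs N) a b"
proof -
  have "{1..<N} \<times> {1..<N} = simplex_pairs N \<union> corner_pairs N" "simplex_pairs N \<inter> corner_pairs N = {}"
    by (auto simp: simplex_pairs_def corner_pairs_def)
  then show ?thesis
    unfolding zeta_part_mult pair_sum_def by (simp add: sum.union_disjoint finite_simplex_pairs finite_corner_pairs)
qed

lemma sum_simplex_eq_mzv_pairs:
  "(\<Sum>(x, y)\<in>simplex_pairs N. g x (x + y)) = (\<Sum>(k1, k2)\<in>mzv_pairs N. g k1 k2)"
  "(\<Sum>(x, y)\<in>simplex_pairs N. g y (x + y)) = (\<Sum>(k1, k2)\<in>mzv_pairs N. g k1 k2)"
  by (rule sum.reindex_bij_witness[of _ "\<lambda>(k1, k2). (k1, k2 - k1)" "\<lambda>(x, y). (x, x + y)"];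
      auto simp: mzv_pairs_def simplex_pairs_def)
     (rule sum.reindex_bij_witness[of _ "\<lambda>(k1, k2). (k2 - k1, k1)" "\<lambda>(x, y). (y, x + y)"];
      auto simp: mzv_pairs_def simplex_pairs_def)

text \<open>Substituting \<open>k2 = x + y\<close> and applying the partial fraction expansion termwise.\<close>

lemma pair_sum_mzv_pairs_expansion:
  assumes "m \<ge> 1" "n \<ge> 1"
  shows "pair_sum (mzv_pairs N) m n =
      (\<Sum>i<m. (-1) ^ i * real ((n + i - 1) choose i) * pair_sum (simplex_pairs N) (m - i) (n + i))
    + (-1) ^ m * (\<Sum>j<n. real ((m + j - 1) choose j) * pair_sum (mzv_pairs N) (m + j) (n - j))"
proof -
  have "pair_sum (mzv_pairs N) m n = (\<Sum>(x, y)\<in>simplex_pairs N. 1 / (real x ^ m * real (x + y) ^ n))"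
    unfolding pair_sum_def sum_simplex_eq_mzv_pairs(1)[of "\<lambda>k1 k2. 1 / (real k1 ^ m * real k2 ^ n)"] ..
  also have "\<dots> = (\<Sum>(x, y)\<in>simplex_pairs N.
        (\<Sum>i<m. (-1) ^ i * real ((n + i - 1) choose i) / (real x ^ (m - i) * real y ^ (n + i)))
      + (-1) ^ m * (\<Sum>j<n. real ((m + j - 1) choose j) / (real y ^ (m + j) * real (x + y) ^ (n - j))))"
  proof (intro sum.cong refl)
    fix z assume "z \<in> simplex_pairs N"
    then obtain x y where "z = (x, y)" "x > 0" "y > 0"
      by (auto simp: simplex_pairs_def)
    then show "(case z of (x, y) \<Rightarrow> 1 / (real x ^ m * real (x + y) ^ n)) =
      (case z of (x, y) \<Rightarrow>
        (\<Sum>i<m. (-1) ^ i * real ((n + i - 1) choose i) / (real x ^ (m - i) * real y ^ (n + i)))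
      + (-1) ^ m * (\<Sum>j<n. real ((m + j - 1) choose j) / (real y ^ (m + j) * real (x + y) ^ (n - j))))"
      using partial_fractions[of "real x" "real y" m n] assms by simp
  qed
  also have "\<dots> = (\<Sum>i<m. (-1) ^ i * real ((n + i - 1) choose i) * pair_sum (simplex_pairs N) (m - i) (n + i))
      + (-1) ^ m * (\<Sum>j<n. real ((m + j - 1) choose j) *
          (\<Sum>(x, y)\<in>simplex_pairs N. 1 / (real y ^ (m + j) * real (x + y) ^ (n - j))))"
    unfolding pair_sum_def sum.distrib case_prod_beta
    by (simp add: sum.swap[of _ "simplex_pairs N"] sum_distrib_left)
  also have "\<dots> = (\<Sum>i<m. (-1) ^ i * real ((n + i - 1) choose i) * pair_sum (simplex_pairs N) (m - i) (n + i))
      + (-1) ^ m * (\<Sum>j<n. real ((m + j - 1) choose j) * pair_sum (mzv_pairs N) (m + j) (n - j))"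
    unfolding pair_sum_def sum_simplex_eq_mzv_pairs(2)[of "\<lambda>k1 k2. 1 / (real k1 ^ _ * real k2 ^ _)"] ..
  finally show ?thesis .
qed

section \<open>Estimates and limits\<close>

lemma sum_inverse_squares_greaterThanLessThan_le:
  assumes "k \<ge> 1"
  shows "(\<Sum>j\<in>{k<..<N}. 1 / real j ^ 2) \<le> 1 / real k"
proof -
  have telescope: "(\<Sum>j\<in>{k<..<k + 1 + d}. 1 / real j ^ 2) \<le> 1 / real k - 1 / real (k + d)" for d
  proof (induction d)
    case 0
    have "{k<..<k + 1 + 0} = {}"
      by auto
    then show ?case
      by simp
  next
    case (Suc d)
    have "{k<..<k + 1 + Suc d} = insert (k + 1 + d) {k<..<k + 1 + d}"
      by auto
    moreover have "1 / real (k + 1 + d) ^ 2 \<le> 1 / real (k + d) - 1 / real (k + Suc d)"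
    proof -
      have "1 / real (k + 1 + d) ^ 2 \<le> 1 / (real (k + d) * real (k + 1 + d))"
        using assms by (intro divide_left_mono) (auto simp: power2_eq_square intro!: mult_mono)
      also have "\<dots> = 1 / real (k + d) - 1 / real (k + Suc d)"
        using assms by (simp add: field_simps)
      finally show ?thesis .
    qed
    ultimately show ?case
      using Suc by simp
  qed
  show ?thesis
  proof (cases "N \<le> k + 1")
    case True
    then have "{k<..<N} = {}"
      by auto
    then show ?thesis
      by simp
  next
    case False
    then obtain d where "N = k + 1 + d"
      using le_add_diff_inverse by (metis nat_le_linear)
    then show ?thesis
      using telescope[of d] by (smt (verit) of_nat_0_le_iff divide_nonneg_nonneg)
  qed
qed

lemma zeta_part_Suc: "zeta_part (Suc N) a = (\<Sum>k<N. 1 / real (k + 1) ^ a)"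
  unfolding zeta_part_def by (rule sum.reindex_bij_witness[of _ Suc "\<lambda>k. k - 1"]) auto

lemma zeta_part_nonneg: "zeta_part N a \<ge> 0"
  unfolding zeta_part_def by (intro sum_nonneg) auto

lemma zeta_part_antimono:
  assumes "1 \<le> a" "a \<le> b"
  shows "zeta_part N b \<le> zeta_part N a"
  unfolding zeta_part_def
proof (rule sum_mono)
  fix k assume "k \<in> {1..<N}"
  then have "k > 0"
    by simp
  then have "real k ^ a \<le> real k ^ b" "real k ^ a > 0"
    using assms by (simp_all add: power_increasing)
  then show "1 / real k ^ b \<le> 1 / real k ^ a"
    by (simp add: frac_le)
qed

lemma zeta_part_le_2:
  assumes "b \<ge> 2"
  shows "zeta_part N b \<le> 2"
proof -
  have "zeta_part N 2 \<le> (\<Sum>k\<in>insert 1 {1<..<N}. 1 / real k ^ 2)"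
    unfolding zeta_part_def by (intro sum_mono2) auto
  also have "\<dots> \<le> 2"
    using sum_inverse_squares_greaterThanLessThan_le[of 1 N] by (subst sum.insert) auto
  finally show ?thesis
    using zeta_part_antimono[of 2 b N] assms by simp
qed

lemma zeta_part_1_eq_harm: "zeta_part N 1 = harm (N - 1)"
  by (cases N) (auto simp: zeta_part_def harm_def atLeastLessThanSuc_atLeastAtMost divide_inverse)

lemma zeta_part_1_le_ln:
  assumes "N \<ge> 1"
  shows "zeta_part N 1 \<le> 1 + ln (real N)"
proof (cases "N = 1")
  case False
  then have "harm (N - 1) - ln (real (N - 1)) \<le> harm 1 - ln (real (1::nat))"
    using euler_mascheroni_sequence_decreasing[of 1 "N - 1"] assms by simp
  moreover have "ln (real (N - 1)) \<le> ln (real N)"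
    using False assms by simp
  moreover have "harm 1 = (1::real)"
    by (simp add: harm_def)
  ultimately show ?thesis
    unfolding zeta_part_1_eq_harm by simp
qed (simp add: zeta_part_def)

abbreviation harm_approx :: "nat \<Rightarrow> real" where
  "harm_approx N \<equiv> ln (real N) + euler_mascheroni"

lemma zeta_part_1_asymptotics: "(\<lambda>N. zeta_part N 1 - harm_approx N) \<longlonglongrightarrow> 0"
proof -
  have "(\<lambda>N. (harm N - ln (real N) - euler_mascheroni) - 1 / real N) \<longlonglongrightarrow> 0 - 0"
    using euler_mascheroni_LIMSEQ by (intro tendsto_diff lim_inverse_n') (simp add: LIM_zero)
  moreover have "\<forall>\<^sub>F N in sequentially.
      (harm N - ln (real N) - euler_mascheroni) - 1 / real N = zeta_part N 1 - harm_approx N"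
  proof (rule eventually_sequentiallyI[of 1])
    fix N :: nat assume "N \<ge> 1"
    then show "(harm N - ln (real N) - euler_mascheroni) - 1 / real N = zeta_part N 1 - harm_approx N"
      using harm_Suc[of "N - 1", where 'a = real] unfolding zeta_part_1_eq_harm by (simp add: divide_inverse)
  qed
  ultimately show ?thesis
    by (simp add: Lim_transform_eventually)
qed

lemma filterlim_zeta_part_1_at_top: "filterlim (\<lambda>N. zeta_part N 1) at_top sequentially"
proof (rule filterlim_at_top_mono)
  show "filterlim (\<lambda>N::nat. ln (real N)) at_top sequentially"
    by real_asymp
  show "\<forall>\<^sub>F N in sequentially. ln (real N) \<le> zeta_part N 1"
  proof (rule eventually_sequentiallyI[of 1])
    fix N :: nat assume "N \<ge> 1"
    then show "ln (real N) \<le> zeta_part N 1"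
      using ln_le_harm[of "N - 1"] unfolding zeta_part_1_eq_harm by (simp add: of_nat_diff)
  qed
qed

lemma summable_inverse_Suc_power:
  assumes "b \<ge> 2"
  shows "summable (\<lambda>k. 1 / real (k + 1) ^ b)"
proof -
  have "summable (\<lambda>k. inverse (real (Suc k) ^ b))"
    using inverse_power_summable[OF assms, where 'a = real] by (subst summable_Suc_iff)
  then show ?thesis
    by (simp add: divide_inverse)
qed

lemma zeta_part_LIMSEQ:
  assumes "b \<ge> 2"
  shows "(\<lambda>N. zeta_part N b) \<longlonglongrightarrow> zeta b"
proof (rule LIMSEQ_imp_Suc)
  show "(\<lambda>N. zeta_part (Suc N) b) \<longlonglongrightarrow> zeta b"
    using summable_LIMSEQ[OF summable_inverse_Suc_power[OF assms]] unfolding zeta_part_Suc zeta_def .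
qed

lemma zeta_minus_zeta_part_bounds:
  assumes "b \<ge> 2" "N \<ge> 2"
  shows "0 \<le> zeta b - zeta_part N b" "zeta b - zeta_part N b \<le> 1 / (real N - 1)"
proof -
  have tail: "zeta_part M b - zeta_part N b = (\<Sum>j\<in>{N..<M}. 1 / real j ^ b)" if "M \<ge> N" for M
    using sum.atLeastLessThan_concat[of 1 N M "\<lambda>j. 1 / real j ^ b"] that assms
    unfolding zeta_part_def by simp
  have lim: "(\<lambda>M. zeta_part M b - zeta_part N b) \<longlonglongrightarrow> zeta b - zeta_part N b"
    by (intro tendsto_diff zeta_part_LIMSEQ assms tendsto_const)
  show "0 \<le> zeta b - zeta_part N b"
  proof (rule LIMSEQ_le_const[OF lim], intro exI[of _ N] allI impI)
    fix M assume "M \<ge> N"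
    then show "0 \<le> zeta_part M b - zeta_part N b"
      unfolding tail[OF \<open>M \<ge> N\<close>] by (intro sum_nonneg) simp
  qed
  show "zeta b - zeta_part N b \<le> 1 / (real N - 1)"
  proof (rule LIMSEQ_le_const2[OF lim], intro exI[of _ N] allI impI)
    fix M assume "M \<ge> N"
    have "(\<Sum>j\<in>{N..<M}. 1 / real j ^ b) \<le> (\<Sum>j\<in>{N..<M}. 1 / real j ^ 2)"
      using assms by (intro sum_mono divide_left_mono power_increasing) auto
    also have "\<dots> \<le> 1 / real (N - 1)"
    proof -
      have "{N..<M} = {N - 1<..<M}"
        using assms by auto
      then show ?thesis
        using sum_inverse_squares_greaterThanLessThan_le[of "N - 1" M] assms by simp
    qed
    finally show "zeta_part M b - zeta_part N b \<le> 1 / (real N - 1)"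
      using tail[OF \<open>M \<ge> N\<close>] assms by (simp add: of_nat_diff)
  qed
qed

lemma inverse_powers_le_inverse_mult_square:
  assumes "k1 \<ge> 1" "k2 \<ge> 1" "a \<ge> 1" "b \<ge> 2"
  shows "1 / (real k1 ^ a * real k2 ^ b) \<le> 1 / (real k1 * real k2 ^ 2)"
proof -
  have "real k1 ^ 1 \<le> real k1 ^ a" "real k2 ^ 2 \<le> real k2 ^ b"
    using assms by (intro power_increasing; simp)+
  then show ?thesis
    using assms by (intro divide_left_mono mult_mono mult_pos_pos) auto
qed

lemma pair_sum_mzv_pairs_le:
  assumes "a \<ge> 1" "b \<ge> 2"
  shows "pair_sum (mzv_pairs N) a b \<le> 2"
proof -
  have "pair_sum (mzv_pairs N) a b \<le> (\<Sum>(k1, k2)\<in>mzv_pairs N. 1 / (real k1 * real k2 ^ 2))"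
    unfolding pair_sum_def
    by (intro sum_mono) (auto simp: mzv_pairs_def intro!: inverse_powers_le_inverse_mult_square assms)
  also have "\<dots> = (\<Sum>k1\<in>{1..<N}. 1 / real k1 * (\<Sum>k2\<in>{k1<..<N}. 1 / real k2 ^ 2))"
  proof -
    have "mzv_pairs N = Sigma {1..<N} (\<lambda>k1. {k1<..<N})"
      by (auto simp: mzv_pairs_def)
    then show ?thesis
      by (simp add: sum.Sigma sum_distrib_left)
  qed
  also have "\<dots> \<le> (\<Sum>k1\<in>{1..<N}. 1 / real k1 * (1 / real k1))"
    using sum_inverse_squares_greaterThanLessThan_le
    by (intro sum_mono mult_left_mono) auto
  also have "\<dots> = zeta_part N 2"
    by (simp add: zeta_part_def power2_eq_square)
  finally show ?thesis
    using zeta_part_le_2[of 2 N] by simp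
qed

lemma pair_sum_mzv_star_pairs_le:
  assumes "a \<ge> 1" "b \<ge> 2"
  shows "pair_sum (mzv_star_pairs N) a b \<le> 4"
  using pair_sum_mzv_star_pairs[of N a b] pair_sum_mzv_pairs_le[OF assms, of N]
    zeta_part_le_2[of "a + b" N] assms by simp

lemma finite_subset_square:
  fixes X :: "(nat \<times> nat) set"
  assumes "finite X"
  obtains n where "X \<subseteq> {..<n} \<times> {..<n}"
proof -
  have "finite (fst ` X \<union> snd ` X)"
    using assms by simp
  then obtain n where "\<forall>k \<in> fst ` X \<union> snd ` X. k < n"
    by (auto simp: finite_nat_set_iff_bounded)
  then have "X \<subseteq> {..<n} \<times> {..<n}"
    by force
  then show ?thesis ..
qed

lemma tendsto_sum_square_truncations:
  assumes "f summable_on A"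
  shows "(\<lambda>N. sum f (A \<inter> {..<N} \<times> {..<N})) \<longlonglongrightarrow> infsum f A"
proof -
  have "filterlim (\<lambda>N. A \<inter> {..<N} \<times> {..<N}) (finite_subsets_at_top A) sequentially"
    unfolding filterlim_finite_subsets_at_top
  proof (intro allI impI)
    fix X assume X: "finite X \<and> X \<subseteq> A"
    then obtain n where n: "X \<subseteq> {..<n} \<times> {..<n}"
      by (auto elim: finite_subset_square)
    show "\<forall>\<^sub>F N in sequentially. finite (A \<inter> {..<N} \<times> {..<N}) \<and>
        X \<subseteq> A \<inter> {..<N} \<times> {..<N} \<and> A \<inter> {..<N} \<times> {..<N} \<subseteq> A"
      using eventually_ge_at_top[of n] by eventually_elim (use X n in auto)
  qed
  then show ?thesis
    by (rule filterlim_compose[OF infsum_tendsto[OF assms]])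
qed

lemma nonneg_bounded_square_truncations_summable_on:
  fixes f :: "nat \<times> nat \<Rightarrow> real"
  assumes "\<And>z. z \<in> A \<Longrightarrow> f z \<ge> 0" "\<And>N. sum f (A \<inter> {..<N} \<times> {..<N}) \<le> B"
  shows "f summable_on A"
proof (rule nonneg_bdd_above_summable_on)
  show "bdd_above (sum f ` {F. F \<subseteq> A \<and> finite F})"
  proof (rule bdd_aboveI2)
  fix F assume F: "F \<in> {F. F \<subseteq> A \<and> finite F}"
  then obtain n where "F \<subseteq> {..<n} \<times> {..<n}"
    by (auto elim: finite_subset_square)
  with F have "sum f F \<le> sum f (A \<inter> {..<n} \<times> {..<n})"
    using assms(1) by (intro sum_mono2) auto
  then show "sum f F \<le> B"
    using assms(2)[of n] by linarith
  qed
qed (use assms in auto)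

lemma mzv2_LIMSEQ:
  assumes "a \<ge> 1" "b \<ge> 2"
  shows "(\<lambda>N. pair_sum (mzv_pairs N) a b) \<longlonglongrightarrow> mzv2 a b"
proof -
  let ?A = "{(k1, k2). 0 < k1 \<and> k1 < k2}"
  have eq: "mzv_pairs N = ?A \<inter> {..<N} \<times> {..<N}" for N
    by (auto simp: mzv_pairs_def)
  have "(\<lambda>(k1, k2). 1 / (real k1 ^ a * real k2 ^ b)) summable_on ?A"
    using pair_sum_mzv_pairs_le[OF assms]
    by (intro nonneg_bounded_square_truncations_summable_on[where B = 2]) (auto simp: pair_sum_def eq)
  then show ?thesis
    unfolding mzv2_def pair_sum_def eq by (rule tendsto_sum_square_truncations)
qed

lemma mzv2_star_LIMSEQ:
  assumes "a \<ge> 1" "b \<ge> 2"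
  shows "(\<lambda>N. pair_sum (mzv_star_pairs N) a b) \<longlonglongrightarrow> mzv2_star a b"
proof -
  let ?A = "{(k1, k2). 0 < k1 \<and> k1 \<le> k2}"
  have eq: "mzv_star_pairs N = ?A \<inter> {..<N} \<times> {..<N}" for N
    by (auto simp: mzv_star_pairs_def)
  have "(\<lambda>(k1, k2). 1 / (real k1 ^ a * real k2 ^ b)) summable_on ?A"
    using pair_sum_mzv_star_pairs_le[OF assms]
    by (intro nonneg_bounded_square_truncations_summable_on[where B = 4]) (auto simp: pair_sum_def eq)
  then show ?thesis
    unfolding mzv2_star_def pair_sum_def eq by (rule tendsto_sum_square_truncations)
qed

lemma zeta_part_mult_tail_LIMSEQ_0:
  assumes "a \<ge> 1" "b \<ge> 2"
  shows "(\<lambda>N. zeta_part N a * (zeta_part N b - zeta b)) \<longlonglongrightarrow> 0"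
proof (rule Lim_null_comparison)
  show "\<forall>\<^sub>F N in sequentially. norm (zeta_part N a * (zeta_part N b - zeta b)) \<le> (1 + ln (real N)) / (real N - 1)"
  proof (rule eventually_sequentiallyI[of 2])
    fix N :: nat assume "N \<ge> 2"
    note tail = zeta_minus_zeta_part_bounds[OF assms(2) this]
    have "norm (zeta_part N a * (zeta_part N b - zeta b)) = zeta_part N a * (zeta b - zeta_part N b)"
      using zeta_part_nonneg[of N a] tail by (simp add: abs_mult)
    also have "\<dots> \<le> (1 + ln (real N)) * (1 / (real N - 1))"
      using zeta_part_antimono[of 1 a N] zeta_part_1_le_ln[of N] zeta_part_nonneg[of N a] tail assms \<open>N \<ge> 2\<close>
      by (intro mult_mono) auto
    finally show "norm (zeta_part N a * (zeta_part N b - zeta b)) \<le> (1 + ln (real N)) / (real N - 1)"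
      by simp
  qed
  show "(\<lambda>N. (1 + ln (real N)) / (real N - 1)) \<longlonglongrightarrow> 0"
    by real_asymp
qed

lemma sum_corner_pairs_snd:
  "(\<Sum>(x, y)\<in>corner_pairs N. g y) = (\<Sum>y\<in>{1..<N}. real y * g y)"
proof -
  have "(\<Sum>(x, y)\<in>corner_pairs N. g y) = (\<Sum>(y, x)\<in>Sigma {1..<N} (\<lambda>y. {N - y..<N}). g y)"
    by (rule sum.reindex_bij_witness[of _ prod.swap prod.swap]) (auto simp: corner_pairs_def)
  also have "\<dots> = (\<Sum>y\<in>{1..<N}. real y * g y)"
    by (subst sum.Sigma[symmetric]) auto
  finally show ?thesis .
qed

text \<open>Since \<open>x + y \<ge> N\<close> on the corner, writing \<open>1 / (x y\<^sup>2) = (1 / (x y) + 1 / y\<^sup>2) / (x + y)\<close> gains a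
  factor \<open>1 / N\<close>.\<close>

lemma pair_sum_corner_pairs_le:
  assumes "a \<ge> 1" "b \<ge> 2" "N \<ge> 1"
  shows "pair_sum (corner_pairs N) a b \<le> ((1 + ln (real N))^2 + (1 + ln (real N))) / real N"
proof -
  have "pair_sum (corner_pairs N) a b \<le> (\<Sum>(x, y)\<in>corner_pairs N. (1 / (real x * real y) + 1 / real y ^ 2) / real N)"
    unfolding pair_sum_def
  proof (rule sum_mono)
    fix z assume "z \<in> corner_pairs N"
    then obtain x y where z: "z = (x, y)" "x \<ge> 1" "y \<ge> 1" "N \<le> x + y"
      by (auto simp: corner_pairs_def)
    have "1 / (real x ^ a * real y ^ b) \<le> 1 / (real x * real y ^ 2)"
      using inverse_powers_le_inverse_mult_square z assms by simp
    also have "\<dots> = (1 / (real x * real y) + 1 / real y ^ 2) / (real x + real y)"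
      using z by (simp add: divide_simps power2_eq_square)
    also have "\<dots> \<le> (1 / (real x * real y) + 1 / real y ^ 2) / real N"
      using z assms by (intro divide_left_mono) auto
    finally show "(case z of (x, y) \<Rightarrow> 1 / (real x ^ a * real y ^ b))
        \<le> (case z of (x, y) \<Rightarrow> (1 / (real x * real y) + 1 / real y ^ 2) / real N)"
      using z by simp
  qed
  also have "\<dots> = ((\<Sum>(x, y)\<in>corner_pairs N. 1 / (real x * real y)) + (\<Sum>(x, y)\<in>corner_pairs N. 1 / real y ^ 2)) / real N"
    by (simp add: case_prod_beta sum.distrib sum_divide_distrib add_divide_distrib)
  also have "\<dots> \<le> ((1 + ln (real N))^2 + (1 + ln (real N))) / real N"
  proof (intro divide_right_mono add_mono)
    have "(\<Sum>(x, y)\<in>corner_pairs N. 1 / (real x * real y)) \<le> pair_sum ({1..<N} \<times> {1..<N}) 1 1"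
      unfolding pair_sum_def power_one_right by (intro sum_mono2) (auto simp: corner_pairs_def)
    also have "\<dots> = zeta_part N 1 * zeta_part N 1"
      by (simp add: zeta_part_mult)
    also have "\<dots> \<le> (1 + ln (real N))^2"
      using zeta_part_1_le_ln[OF assms(3)] zeta_part_nonneg[of N 1] by (simp add: power2_eq_square mult_mono)
    finally show "(\<Sum>(x, y)\<in>corner_pairs N. 1 / (real x * real y)) \<le> (1 + ln (real N))^2" .
    have "(\<Sum>(x, y)\<in>corner_pairs N. 1 / real y ^ 2) = zeta_part N 1"
      unfolding sum_corner_pairs_snd zeta_part_def by (intro sum.cong) (auto simp: power2_eq_square)
    then show "(\<Sum>(x, y)\<in>corner_pairs N. 1 / real y ^ 2) \<le> 1 + ln (real N)"
      using zeta_part_1_le_ln[OF assms(3)] by simp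
  qed simp
  finally show ?thesis .
qed

lemma pair_sum_corner_pairs_LIMSEQ_0:
  assumes "a \<ge> 1" "b \<ge> 2"
  shows "(\<lambda>N. pair_sum (corner_pairs N) a b) \<longlonglongrightarrow> 0"
proof (rule Lim_null_comparison)
  show "\<forall>\<^sub>F N in sequentially. norm (pair_sum (corner_pairs N) a b) \<le> ((1 + ln (real N))^2 + (1 + ln (real N))) / real N"
  proof (rule eventually_sequentiallyI[of 1])
    fix N :: nat assume "N \<ge> 1"
    have "pair_sum (corner_pairs N) a b \<ge> 0"
      unfolding pair_sum_def by (intro sum_nonneg) auto
    then show "norm (pair_sum (corner_pairs N) a b) \<le> ((1 + ln (real N))^2 + (1 + ln (real N))) / real N"
      using pair_sum_corner_pairs_le[OF assms \<open>N \<ge> 1\<close>] by simp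
  qed
  show "(\<lambda>N. ((1 + ln (real N))^2 + (1 + ln (real N))) / real N) \<longlonglongrightarrow> 0"
    by real_asymp
qed

section \<open>Polynomial asymptotics and regularized values\<close>

definition poly_asymptotic :: "'a filter \<Rightarrow> ('a \<Rightarrow> real) \<Rightarrow> ('a \<Rightarrow> real) \<Rightarrow> real poly \<Rightarrow> bool" where
  "poly_asymptotic F g f p \<longleftrightarrow> ((\<lambda>x. f x - poly p (g x)) \<longlongrightarrow> 0) F"

lemma poly_asymptotic_const_iff: "poly_asymptotic F g f [:c:] \<longleftrightarrow> (f \<longlongrightarrow> c) F"
  by (simp add: poly_asymptotic_def LIM_zero_iff)

lemma poly_asymptotic_0_iff: "poly_asymptotic F g f 0 \<longleftrightarrow> (f \<longlongrightarrow> 0) F"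
  by (simp add: poly_asymptotic_def)

lemma poly_asymptotic_add:
  "poly_asymptotic F g f p \<Longrightarrow> poly_asymptotic F g h q \<Longrightarrow> poly_asymptotic F g (\<lambda>x. f x + h x) (p + q)"
  unfolding poly_asymptotic_def by (drule (1) tendsto_add) (simp add: algebra_simps)

lemma poly_asymptotic_diff:
  "poly_asymptotic F g f p \<Longrightarrow> poly_asymptotic F g h q \<Longrightarrow> poly_asymptotic F g (\<lambda>x. f x - h x) (p - q)"
  unfolding poly_asymptotic_def by (drule (1) tendsto_diff) (simp add: algebra_simps)

lemma poly_asymptotic_cmult:
  "poly_asymptotic F g f p \<Longrightarrow> poly_asymptotic F g (\<lambda>x. c * f x) ([:c:] * p)"
  unfolding poly_asymptotic_def by (drule tendsto_mult_right_zero[of _ _ c]) (simp add: algebra_simps)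

lemma poly_asymptotic_sum:
  "(\<And>i. i \<in> I \<Longrightarrow> poly_asymptotic F g (f i) (p i)) \<Longrightarrow>
    poly_asymptotic F g (\<lambda>x. \<Sum>i\<in>I. f i x) (\<Sum>i\<in>I. p i)"
  unfolding poly_asymptotic_def by (drule tendsto_null_sum) (simp add: poly_sum sum_subtractf)

text \<open>A nonconstant polynomial tends to infinity, so a polynomial vanishing asymptotically is zero.\<close>

lemma poly_asymptotic_unique:
  assumes g: "filterlim g at_top F" and "F \<noteq> bot"
    and "poly_asymptotic F g f p" "poly_asymptotic F g f q"
  shows "p = q"
proof (rule ccontr)
  assume "p \<noteq> q"
  have lim: "((\<lambda>x. poly (p - q) (g x)) \<longlongrightarrow> 0) F"
    using poly_asymptotic_diff[OF assms(4,3)] by (simp add: poly_asymptotic_def)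
  show False
  proof (cases "degree (p - q) = 0")
    case True
    then obtain c where c: "p - q = [:c:]"
      by (rule degree_eq_zeroE)
    with lim have "c = 0"
      using tendsto_const_iff[OF \<open>F \<noteq> bot\<close>, of c 0] by simp
    with c \<open>p \<noteq> q\<close> show False
      by simp
  next
    case False
    then have "filterlim (\<lambda>x. poly (p - q) (g x)) at_infinity F"
      using filterlim_compose[OF filterlim_poly_at_infinity filterlim_at_top_imp_at_infinity[OF g]]
      by blast
    then show False
      using not_tendsto_and_filterlim_at_infinity[OF \<open>F \<noteq> bot\<close> lim] by blast
  qed
qed

lemma the_poly_asymptotic:
  assumes "filterlim g at_top F" "F \<noteq> bot" "degree p \<le> d" "poly_asymptotic F g f p"
  shows "(THE p. degree p \<le> d \<and> ((\<lambda>x. f x - poly p (g x)) \<longlongrightarrow> 0) F) = p"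
  using assms poly_asymptotic_unique[OF assms(1,2)]
  by (intro the_equality) (auto simp: poly_asymptotic_def)

lemma zeta_sh_eqI:
  assumes "degree p \<le> 1"
    and "poly_asymptotic (at_right 0) (\<lambda>\<epsilon>. - ln \<epsilon>) (\<lambda>\<epsilon>. \<Sum>k. (1 - \<epsilon>) ^ (k + 1) / real (k + 1) ^ m) p"
  shows "zeta_sh m = p"
proof -
  have "filterlim (\<lambda>\<epsilon>::real. - ln \<epsilon>) at_top (at_right 0)"
    by real_asymp
  then show ?thesis
    unfolding zeta_sh_def using assms by (intro the_poly_asymptotic) auto
qed

text \<open>For \<open>m \<ge> 2\<close> the series converges uniformly on \<open>[0, 1]\<close>, hence is continuous at \<open>\<epsilon> = 0\<close>.\<close>

lemma zeta_sh_eq_zeta: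
  assumes "m \<ge> 2"
  shows "zeta_sh m = [:zeta m:]"
proof (rule zeta_sh_eqI)
  let ?h = "\<lambda>\<epsilon>::real. \<Sum>k. (1 - \<epsilon>) ^ (k + 1) / real (k + 1) ^ m"
  have "uniform_limit {0..1} (\<lambda>n \<epsilon>. \<Sum>k<n. (1 - \<epsilon>) ^ (k + 1) / real (k + 1) ^ m) ?h sequentially"
  proof (rule Weierstrass_m_test)
    fix k and \<epsilon> :: real assume "\<epsilon> \<in> {0..1}"
    then have "\<bar>1 - \<epsilon>\<bar> ^ (k + 1) \<le> 1"
      by (intro power_le_one) auto
    then show "norm ((1 - \<epsilon>) ^ (k + 1) / real (k + 1) ^ m) \<le> 1 / real (k + 1) ^ m"
      by (simp add: abs_mult power_abs divide_right_mono)
  qed (rule summable_inverse_Suc_power[OF assms])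
  then have "continuous_on {0..1} ?h"
    by (rule uniform_limit_theorem[rotated]) (auto intro!: always_eventually continuous_intros)
  then have "(?h \<longlongrightarrow> ?h 0) (at_right 0)"
    by (rule continuous_on_Icc_at_rightD) simp
  then show "poly_asymptotic (at_right 0) (\<lambda>\<epsilon>. - ln \<epsilon>) ?h [:zeta m:]"
    by (simp add: poly_asymptotic_const_iff zeta_def)
qed simp

text \<open>For \<open>m = 1\<close> the series is exactly the Mercator series of \<open>- ln \<epsilon>\<close>.\<close>

lemma zeta_sh_1: "zeta_sh 1 = [:0, 1:]"
proof (rule zeta_sh_eqI)
  have "(\<Sum>k. (1 - \<epsilon>) ^ (k + 1) / real (k + 1) ^ 1) = - ln \<epsilon>" if "0 < \<epsilon>" "\<epsilon> < 1" for \<epsilon> :: real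
  proof -
    have "(\<lambda>n. - ((1 - \<epsilon>) ^ n) / real n) sums ln \<epsilon>"
      using ln_series'[of "\<epsilon> - 1"] that by simp
    then have "(\<lambda>k. - ((1 - \<epsilon>) ^ (k + 1) / real (k + 1))) sums ln \<epsilon>"
      using sums_Suc_iff[of "\<lambda>n. - ((1 - \<epsilon>) ^ n) / real n" "ln \<epsilon>"] by simp
    then show ?thesis
      using sums_minus sums_unique by fastforce
  qed
  moreover have "\<forall>\<^sub>F \<epsilon> in at_right (0::real). \<epsilon> \<in> {0<..<1}"
    by (rule eventually_at_right_real) simp
  ultimately have "\<forall>\<^sub>F \<epsilon> in at_right 0. (\<Sum>k. (1 - \<epsilon>) ^ (k + 1) / real (k + 1) ^ 1) - poly [:0, 1:] (- ln \<epsilon>) = 0"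
    by (auto elim: eventually_mono)
  then show "poly_asymptotic (at_right 0) (\<lambda>\<epsilon>. - ln \<epsilon>) (\<lambda>\<epsilon>. \<Sum>k. (1 - \<epsilon>) ^ (k + 1) / real (k + 1) ^ 1) [:0, 1:]"
    unfolding poly_asymptotic_def by (rule tendsto_eventually)
qed simp

lemma zeta_st_eqI:
  assumes "degree p \<le> 2" "poly_asymptotic sequentially harm_approx (\<lambda>N. pair_sum (mzv_pairs N) a b) p"
  shows "zeta_st a b = p"
proof -
  have "filterlim harm_approx at_top sequentially"
    by real_asymp
  then show ?thesis
    unfolding zeta_st_def pair_sum_mzv_pairs_nested using assms by (intro the_poly_asymptotic) auto
qed

lemma zeta_st_eq_mzv2:
  assumes "a \<ge> 1" "b \<ge> 2"
  shows "zeta_st a b = [:mzv2 a b:]"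
  using mzv2_LIMSEQ[OF assms] by (intro zeta_st_eqI) (simp_all add: poly_asymptotic_0_iff poly_asymptotic_const_iff)

text \<open>For \<open>b = 1\<close> the stuffle product \<open>\<zeta>\<^sub>N(a) \<zeta>\<^sub>N(1) = \<zeta>\<^sub>N(a, 1) + \<zeta>\<^sub>N\<^sup>\<star>(1, a)\<close> isolates the divergence.\<close>

lemma poly_asymptotic_mzv_pairs_1:
  assumes "a \<ge> 2"
  shows "poly_asymptotic sequentially harm_approx (\<lambda>N. pair_sum (mzv_pairs N) a 1) [:- mzv2_star 1 a, zeta a:]"
proof -
  have eq: "pair_sum (mzv_pairs N) a 1 - poly [:- mzv2_star 1 a, zeta a:] (harm_approx N) =
      zeta_part N 1 * (zeta_part N a - zeta a) + zeta a * (zeta_part N 1 - harm_approx N)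
      - (pair_sum (mzv_star_pairs N) 1 a - mzv2_star 1 a)" for N
    using zeta_part_mult_eq_mzv_pairs[of N a 1] by (simp add: algebra_simps)
  have "(\<lambda>N. zeta_part N 1 * (zeta_part N a - zeta a) + zeta a * (zeta_part N 1 - harm_approx N)
      - (pair_sum (mzv_star_pairs N) 1 a - mzv2_star 1 a)) \<longlonglongrightarrow> 0 + zeta a * 0 - 0"
    using zeta_part_mult_tail_LIMSEQ_0[of 1 a] zeta_part_1_asymptotics mzv2_star_LIMSEQ[of 1 a] assms
    by (intro tendsto_intros) (auto simp: LIM_zero)
  then show ?thesis
    unfolding poly_asymptotic_def eq by simp
qed

lemma zeta_st_1:
  assumes "a \<ge> 2"
  shows "zeta_st a 1 = [:- mzv2_star 1 a, zeta a:]"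
  using poly_asymptotic_mzv_pairs_1[OF assms] by (intro zeta_st_eqI) auto

lemma poly_asymptotic_mzv_pairs_zeta_st:
  assumes "a \<ge> 1" "b \<ge> 1" "b = 1 \<longrightarrow> a \<ge> 2"
  shows "poly_asymptotic sequentially harm_approx (\<lambda>N. pair_sum (mzv_pairs N) a b) (zeta_st a b)"
proof (cases "b = 1")
  case True
  then show ?thesis
    using assms poly_asymptotic_mzv_pairs_1 zeta_st_1 by simp
next
  case False
  then show ?thesis
    using assms mzv2_LIMSEQ[of a b] zeta_st_eq_mzv2[of a b] by (simp add: poly_asymptotic_const_iff)
qed

section \<open>Asymptotic expansions of truncated sums\<close>

lemma poly_asymptotic_simplex_pairs_stuffle:
  assumes "a \<ge> 1" "b \<ge> 2"
  shows "poly_asymptotic sequentially harm_approx (\<lambda>N. pair_sum (simplex_pairs N) a b)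
    (zeta_st b a + [:mzv2 a b:] + [:zeta (a + b):])"
proof -
  have "pair_sum (simplex_pairs N) a b =
      pair_sum (mzv_pairs N) b a + pair_sum (mzv_pairs N) a b + zeta_part N (a + b) - pair_sum (corner_pairs N) a b" for N
    using zeta_part_mult_eq_simplex[of N a b] zeta_part_mult_eq_mzv_pairs[of N a b]
      pair_sum_mzv_star_pairs[of N b a] by (simp add: add.commute)
  moreover have "poly_asymptotic sequentially harm_approx (\<lambda>N. pair_sum (mzv_pairs N) b a + pair_sum (mzv_pairs N) a b
      + zeta_part N (a + b) - pair_sum (corner_pairs N) a b) (zeta_st b a + [:mzv2 a b:] + [:zeta (a + b):] - [:0:])"
    using assms by (intro poly_asymptotic_add poly_asymptotic_diff poly_asymptotic_mzv_pairs_zeta_st)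
      (auto simp: poly_asymptotic_0_iff poly_asymptotic_const_iff mzv2_LIMSEQ zeta_part_LIMSEQ pair_sum_corner_pairs_LIMSEQ_0)
  ultimately show ?thesis
    by simp
qed

lemma poly_asymptotic_zeta_part:
  assumes "a \<ge> 1"
  shows "poly_asymptotic sequentially (\<lambda>N. zeta_part N 1) (\<lambda>N. zeta_part N a) (zeta_sh a)"
proof (cases "a = 1")
  case True
  show ?thesis
    unfolding True zeta_sh_1 by (simp add: poly_asymptotic_def)
next
  case False
  then show ?thesis
    using assms zeta_sh_eq_zeta[of a] zeta_part_LIMSEQ[of a] by (simp add: poly_asymptotic_const_iff)
qed

lemma poly_asymptotic_zeta_part_mult:
  assumes "a \<ge> 1" "b \<ge> 2"
  shows "poly_asymptotic sequentially (\<lambda>N. zeta_part N 1) (\<lambda>N. zeta_part N a * zeta_part N b) ([:zeta b:] * zeta_sh a)"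
proof -
  have "poly_asymptotic sequentially (\<lambda>N. zeta_part N 1)
      (\<lambda>N. zeta_part N a * (zeta_part N b - zeta b) + zeta b * zeta_part N a) ([:0:] + [:zeta b:] * zeta_sh a)"
    using zeta_part_mult_tail_LIMSEQ_0[OF assms] assms
    by (intro poly_asymptotic_add poly_asymptotic_cmult poly_asymptotic_zeta_part)
      (simp_all add: poly_asymptotic_0_iff poly_asymptotic_const_iff)
  then show ?thesis
    by (simp add: algebra_simps)
qed

lemma poly_asymptotic_simplex_pairs_shuffle:
  assumes "a \<ge> 1" "b \<ge> 2"
  shows "poly_asymptotic sequentially (\<lambda>N. zeta_part N 1) (\<lambda>N. pair_sum (simplex_pairs N) a b) ([:zeta b:] * zeta_sh a)"
proof -
  have "poly_asymptotic sequentially (\<lambda>N. zeta_part N 1)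
      (\<lambda>N. zeta_part N a * zeta_part N b - pair_sum (corner_pairs N) a b) ([:zeta b:] * zeta_sh a - [:0:])"
    using assms by (intro poly_asymptotic_diff poly_asymptotic_zeta_part_mult)
      (simp_all add: poly_asymptotic_0_iff poly_asymptotic_const_iff pair_sum_corner_pairs_LIMSEQ_0)
  then show ?thesis
    by (simp add: zeta_part_mult_eq_simplex)
qed

lemma poly_asymptotic_mzv_pairs_shuffle:
  assumes "a \<ge> 2" "b \<ge> 1"
  shows "poly_asymptotic sequentially (\<lambda>N. zeta_part N 1) (\<lambda>N. pair_sum (mzv_pairs N) a b)
    ([:zeta a:] * zeta_sh b - [:mzv2_star b a:])"
proof -
  have "poly_asymptotic sequentially (\<lambda>N. zeta_part N 1)
      (\<lambda>N. zeta_part N b * zeta_part N a - pair_sum (mzv_star_pairs N) b a) ([:zeta a:] * zeta_sh b - [:mzv2_star b a:])"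
    using assms by (intro poly_asymptotic_diff poly_asymptotic_zeta_part_mult)
      (simp_all add: poly_asymptotic_0_iff poly_asymptotic_const_iff mzv2_star_LIMSEQ)
  then show ?thesis
    by (simp add: zeta_part_mult_eq_mzv_pairs mult.commute)
qed

lemma poly_asymptotic_mzv_pairs_expansion:
  assumes "m \<ge> 1" "n \<ge> 1"
    and "\<And>i. i < m \<Longrightarrow> poly_asymptotic F g (\<lambda>N. pair_sum (simplex_pairs N) (m - i) (n + i)) (p i)"
    and "\<And>j. j < n \<Longrightarrow> poly_asymptotic F g (\<lambda>N. pair_sum (mzv_pairs N) (m + j) (n - j)) (q j)"
  shows "poly_asymptotic F g (\<lambda>N. pair_sum (mzv_pairs N) m n)
    ((\<Sum>i<m. (-1) ^ i * of_nat ((n + i - 1) choose i) * p i)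
     + (-1) ^ m * (\<Sum>j<n. of_nat ((m + j - 1) choose j) * q j))"
proof -
  have "poly_asymptotic F g (\<lambda>N. (\<Sum>i<m. (-1) ^ i * real ((n + i - 1) choose i) * pair_sum (simplex_pairs N) (m - i) (n + i))
      + (-1) ^ m * (\<Sum>j<n. real ((m + j - 1) choose j) * pair_sum (mzv_pairs N) (m + j) (n - j)))
    ((\<Sum>i<m. [:(-1) ^ i * real ((n + i - 1) choose i):] * p i)
     + [:(-1) ^ m:] * (\<Sum>j<n. [:real ((m + j - 1) choose j):] * q j))"
    using assms(3,4)
    by (intro poly_asymptotic_add poly_asymptotic_cmult poly_asymptotic_sum) auto
  then show ?thesis
    by (simp add: pair_sum_mzv_pairs_expansion[OF assms(1,2)] of_nat_poly poly_const_pow mult.commute flip: pCons_one)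
qed

lemma P_poly_eq_mzv2:
  assumes "m > 1" "n > 1"
  shows "P_poly m n = [:mzv2 m n:]"
proof (rule poly_asymptotic_unique[OF filterlim_zeta_part_1_at_top trivial_limit_sequentially])
  have "P_poly m n = (\<Sum>i<m. (-1) ^ i * of_nat ((n + i - 1) choose i) * ([:zeta (n + i):] * zeta_sh (m - i)))
     + (-1) ^ m * (\<Sum>j<n. of_nat ((m + j - 1) choose j) * ([:zeta (m + j):] * zeta_sh (n - j) - [:mzv2_star (n - j) (m + j):]))"
    by (simp add: P_poly_def mult.assoc)
  also have "poly_asymptotic sequentially (\<lambda>N. zeta_part N 1) (\<lambda>N. pair_sum (mzv_pairs N) m n) \<dots>"
    using assms by (intro poly_asymptotic_mzv_pairs_expansion poly_asymptotic_simplex_pairs_shuffle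
        poly_asymptotic_mzv_pairs_shuffle) auto
  finally show "poly_asymptotic sequentially (\<lambda>N. zeta_part N 1) (\<lambda>N. pair_sum (mzv_pairs N) m n) (P_poly m n)" .
  show "poly_asymptotic sequentially (\<lambda>N. zeta_part N 1) (\<lambda>N. pair_sum (mzv_pairs N) m n) [:mzv2 m n:]"
    using assms by (simp add: poly_asymptotic_const_iff mzv2_LIMSEQ)
qed

lemma mzv2_stuffle_expansion:
  assumes "m > 1" "n > 1"
  shows "[:mzv2 m n:] =
           (\<Sum>i<m. (-1) ^ i * of_nat ((n + i - 1) choose i) *
              (zeta_st (n + i) (m - i) + [:mzv2 (m - i) (n + i):] + [:zeta (m + n):]))
           + (-1) ^ m * (\<Sum>j<n. of_nat ((m + j - 1) choose j) * zeta_st (m + j) (n - j))"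
    (is "_ = ?expansion")
proof (rule poly_asymptotic_unique[OF _ trivial_limit_sequentially])
  show "filterlim harm_approx at_top sequentially"
    by real_asymp
  show "poly_asymptotic sequentially harm_approx (\<lambda>N. pair_sum (mzv_pairs N) m n) [:mzv2 m n:]"
    using assms by (simp add: poly_asymptotic_const_iff mzv2_LIMSEQ)
  have "poly_asymptotic sequentially harm_approx (\<lambda>N. pair_sum (simplex_pairs N) (m - i) (n + i))
      (zeta_st (n + i) (m - i) + [:mzv2 (m - i) (n + i):] + [:zeta (m + n):])" if "i < m" for i
    using poly_asymptotic_simplex_pairs_stuffle[of "m - i" "n + i"] that assms by simp
  then show "poly_asymptotic sequentially harm_approx (\<lambda>N. pair_sum (mzv_pairs N) m n) ?expansion"
    using assms by (intro poly_asymptotic_mzv_pairs_expansion poly_asymptotic_mzv_pairs_zeta_st) auto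
qed

lemma zeta_mult_eq_mzv2:
  assumes "m \<ge> 2" "n \<ge> 2"
  shows "zeta m * zeta n - zeta (m + n) = mzv2 m n + mzv2 n m"
proof (rule LIMSEQ_unique)
  show "(\<lambda>N. zeta_part N m * zeta_part N n - zeta_part N (m + n)) \<longlonglongrightarrow> zeta m * zeta n - zeta (m + n)"
    using assms by (intro tendsto_intros zeta_part_LIMSEQ) auto
  have "zeta_part N m * zeta_part N n - zeta_part N (m + n) = pair_sum (mzv_pairs N) m n + pair_sum (mzv_pairs N) n m" for N
    using zeta_part_mult_eq_mzv_pairs[of N m n] pair_sum_mzv_star_pairs[of N n m] by (simp add: add.commute)
  then show "(\<lambda>N. zeta_part N m * zeta_part N n - zeta_part N (m + n)) \<longlonglongrightarrow> mzv2 m n + mzv2 n m"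
    using assms by (simp add: tendsto_add mzv2_LIMSEQ)
qed

theorem theorem2p4:
  fixes m n :: nat
  assumes "m > 1" and "n > 1"
  shows "[:zeta m * zeta n - zeta (m + n):] = P_poly m n + P_poly n m
    \<and> [:mzv2 m n:] =
           (\<Sum>i<m. (-1) ^ i * of_nat ((n + i - 1) choose i) *
              (zeta_st (n + i) (m - i) + [:mzv2 (m - i) (n + i):] + [:zeta (m + n):]))
           + (-1) ^ m * (\<Sum>j<n. of_nat ((m + j - 1) choose j) * zeta_st (m + j) (n - j))"
proof
  show "[:zeta m * zeta n - zeta (m + n):] = P_poly m n + P_poly n m"
    using zeta_mult_eq_mzv2[of m n] assms by (simp add: P_poly_eq_mzv2)
  show "[:mzv2 m n:] =
           (\<Sum>i<m. (-1) ^ i * of_nat ((n + i - 1) choose i) *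
              (zeta_st (n + i) (m - i) + [:mzv2 (m - i) (n + i):] + [:zeta (m + n):]))
           + (-1) ^ m * (\<Sum>j<n. of_nat ((m + j - 1) choose j) * zeta_st (m + j) (n - j))"
    using assms by (rule mzv2_stuffle_expansion)
qed

end
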